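(* Let $\Gamma^*$ be a closed subgroup of $Sym(\mathbb Q\times\mathbb Z)$ such that the group of shifts is contained in $\Gamma^*$ and $\Gamma^*\subseteq\Gamma({A_1}_1)$. If $\Gamma^*$ initiates the full group $Sym(\mathbb Q)$, then $\Gamma^*=\Gamma(+1)$ or $\Gamma^*=\Gamma({A_1}_1)$.
   Context: $\mathbb Q\times\mathbb Z$ denotes the set $\mathbb Q\times\mathbb Z$ with the lexicographic order. $Sym(X)$ is the group of all permutations of $X$ with the topology of pointwise convergence. A vertical is a set $\{r\}\times\mathbb Z$. A permutation $g$ is systemic if it maps every vertical onto a vertical; it initiates the permutation $h$ of $\mathbb Q$ with $g(\{a\}\times\mathbb Z)=\{h(a)\}\times\mathbb Z$; a group of systemic permutations initiates the set of permutations initiated by its elements. A systemic permutation is positive if it preserves the order on each vertical and negative if it reverses the order on each vertical. A shift is a positive permutation initiating an increasing map of $\mathbb Q$. $\Gamma(+1)$ is the group of all positive permutations (the automorphism group of the successor relation) and $\Gamma({A_1}_1)$ is the group of all positive or negative permutations (the automorphism group of the 1-codirection relation ${A_1}_1(x,y,z,t)\iff x-y=z-t\wedge|x-y|=1$). *)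

theory Defs
  imports Complex_Main
begin

text \<open>The underlying set Q x Z is the type rat \<times> int (with the lexicographic order;
the order itself is not needed for the statement). Permutations are bijections of the type.\<close>

type_synonym pt = "rat \<times> int"

definition vertical :: "rat \<Rightarrow> pt set" where
  "vertical r = {r} \<times> UNIV"

definition systemic :: "(pt \<Rightarrow> pt) \<Rightarrow> bool" where
  "systemic g \<longleftrightarrow> bij g \<and> (\<forall>r. \<exists>s. g ` vertical r = vertical s)"

definition initiated :: "(pt \<Rightarrow> pt) \<Rightarrow> rat \<Rightarrow> rat" where
  "initiated g a = (THE b. g ` vertical a = vertical b)"

definition positive :: "(pt \<Rightarrow> pt) \<Rightarrow> bool" where
  "positive g \<longleftrightarrow> systemic g \<and>
     (\<forall>r m n. m < n \<longrightarrow> snd (g (r, m)) < snd (g (r, n)))"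

definition negative :: "(pt \<Rightarrow> pt) \<Rightarrow> bool" where
  "negative g \<longleftrightarrow> systemic g \<and>
     (\<forall>r m n. m < n \<longrightarrow> snd (g (r, m)) > snd (g (r, n)))"

definition shift :: "(pt \<Rightarrow> pt) \<Rightarrow> bool" where
  "shift g \<longleftrightarrow> positive g \<and> strict_mono (initiated g)"

definition Gamma_succ :: "(pt \<Rightarrow> pt) set" where
  "Gamma_succ = {g. positive g}"

definition Gamma_A11 :: "(pt \<Rightarrow> pt) set" where
  "Gamma_A11 = {g. positive g \<or> negative g}"

text \<open>Subgroup of Sym(X) and closedness in the topology of pointwise convergence.\<close>
definition sym_subgroup :: "('a \<Rightarrow> 'a) set \<Rightarrow> bool" where
  "sym_subgroup G \<longleftrightarrow> (\<forall>g\<in>G. bij g) \<and> id \<in> G \<and>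
     (\<forall>g\<in>G. \<forall>h\<in>G. g \<circ> h \<in> G) \<and> (\<forall>g\<in>G. inv g \<in> G)"

definition sym_closed :: "('a \<Rightarrow> 'a) set \<Rightarrow> bool" where
  "sym_closed G \<longleftrightarrow> (\<forall>g. bij g \<longrightarrow>
     (\<forall>F. finite F \<longrightarrow> (\<exists>h\<in>G. \<forall>x\<in>F. h x = g x)) \<longrightarrow> g \<in> G)"

end

theory Submission
  imports Defs "HOL-Combinatorics.Transposition"
begin

text \<open>Every positive permutation p lies in the closure of G. On finitely many verticals, the
permutation of Q initiated by p has a square root k in Sym(Q); lift k to some g in G. Squares of
positive and of negative permutations are positive, so g o g is a positive permutation initiating
k o k, and on those verticals it differs from p only by vertical offsets, which a shift in G
corrects. Hence Gamma(+1) is contained in G. If G also contains a negative g0, then every negative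
f equals (f o g0) o g0^-1 with f o g0 positive, so G = Gamma(A_1_1).\<close>

lemma mem_vertical_iff [simp]: "x \<in> vertical r \<longleftrightarrow> fst x = r"
  by (cases x) (auto simp: vertical_def)

lemma vertical_eq_iff [simp]: "vertical r = vertical s \<longleftrightarrow> r = s"
  by (auto simp: vertical_def)

lemma systemic_image_vertical:
  assumes "systemic g" shows "g ` vertical a = vertical (initiated g a)"
proof -
  obtain s where s: "g ` vertical a = vertical s"
    using assms unfolding systemic_def by blast
  then have "initiated g a = s"
    unfolding initiated_def by auto
  with s show ?thesis by simp
qed

lemma fst_systemic:
  assumes "systemic g" shows "fst (g (a, n)) = initiated g a"
proof -
  have "g (a, n) \<in> g ` vertical a" by simp
  then show ?thesis using systemic_image_vertical[OF assms] by simp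
qed

lemma bij_initiated:
  assumes "systemic g" shows "bij (initiated g)"
proof (rule bijI)
  have "bij g" using assms unfolding systemic_def by simp
  show "inj (initiated g)"
  proof (rule injI)
    fix a b assume "initiated g a = initiated g b"
    then have "g ` vertical a = g ` vertical b"
      using systemic_image_vertical[OF assms] by simp
    then show "a = b" using inj_image_eq_iff[OF bij_is_inj[OF \<open>bij g\<close>]] by simp
  qed
  show "surj (initiated g)"
  proof -
    have "b \<in> range (initiated g)" for b
    proof -
      obtain x where "g x = (b, 0)" using bij_is_surj[OF \<open>bij g\<close>] by (metis surjD)
      then have "initiated g (fst x) = b" using fst_systemic[OF assms, of "fst x" "snd x"] by simp
      then show ?thesis by blast
    qed
    then show ?thesis by blast
  qed
qed

lemma strict_mono_surj_int_eq_translate: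
  fixes f :: "int \<Rightarrow> int"
  assumes "strict_mono f" "surj f" shows "f n = n + f 0"
proof -
  have step: "f (i + 1) = f i + 1" for i
  proof -
    obtain m where m: "f m = f i + 1" using \<open>surj f\<close> by (metis surjD)
    then have "i < m" using strict_mono_less[OF \<open>strict_mono f\<close>, of i m] by simp
    then have "f (i + 1) \<le> f m" using \<open>strict_mono f\<close> by (simp add: strict_mono_less_eq)
    moreover have "f i < f (i + 1)" using \<open>strict_mono f\<close> by (simp add: strict_mono_less)
    ultimately show ?thesis using m by simp
  qed
  show ?thesis
  proof (induction n rule: int_induct[where k = 0])
    case (step1 i) then show ?case using step[of i] by simp
  next
    case (step2 i) then show ?case using step[of "i - 1"] by simp
  qed simp
qed

definition vtranslation :: "(rat \<Rightarrow> rat) \<Rightarrow> (rat \<Rightarrow> int) \<Rightarrow> pt \<Rightarrow> pt" where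
  "vtranslation h d = (\<lambda>(r, n). (h r, n + d r))"

definition vflip :: "pt \<Rightarrow> pt" where
  "vflip = (\<lambda>(r, n). (r, - n))"

lemma vtranslation_apply [simp]: "vtranslation h d (r, n) = (h r, n + d r)"
  by (simp add: vtranslation_def)

lemma vflip_apply [simp]: "vflip (r, n) = (r, - n)"
  by (simp add: vflip_def)

lemma vflip_vflip [simp]: "vflip (vflip x) = x"
  by (cases x) simp

lemma fst_vflip [simp]: "fst (vflip x) = fst x"
  by (cases x) simp

lemma vflip_comp_vflip [simp]: "vflip \<circ> vflip = id"
  by (simp add: fun_eq_iff)

lemma vtranslation_comp:
  "vtranslation h d \<circ> vtranslation h' d' = vtranslation (h \<circ> h') (\<lambda>r. d' r + d (h' r))"
  by (auto simp: fun_eq_iff)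

lemma vflip_vtranslation_vflip: "vflip \<circ> vtranslation h d \<circ> vflip = vtranslation h (\<lambda>r. - d r)"
  by (auto simp: fun_eq_iff)

lemma bij_vtranslation:
  assumes "bij h" shows "bij (vtranslation h d)"
proof (rule o_bij)
  let ?g = "vtranslation (inv h) (\<lambda>r. - d (inv h r))"
  show "?g \<circ> vtranslation h d = id" "vtranslation h d \<circ> ?g = id"
    using assms by (auto simp: fun_eq_iff bij_is_inj bij_is_surj surj_f_inv_f)
qed

lemma positive_vtranslation:
  assumes "bij h" shows "positive (vtranslation h d)"
proof -
  have "vtranslation h d ` vertical r = vertical (h r)" for r
  proof
    show "vertical (h r) \<subseteq> vtranslation h d ` vertical r"
      by (auto intro!: image_eqI[where x = "(r, _ - d r)"])
  qed auto
  then show ?thesis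
    unfolding positive_def systemic_def using bij_vtranslation[OF assms] by auto
qed

lemma initiated_vtranslation:
  assumes "bij h" shows "initiated (vtranslation h d) = h"
proof
  fix r
  have "systemic (vtranslation h d)"
    using positive_vtranslation[OF assms] positive_def by blast
  from fst_systemic[OF this, of r 0] show "initiated (vtranslation h d) r = h r" by simp
qed

lemma shift_vtranslation_id: "shift (vtranslation id d)"
  unfolding shift_def
  by (simp add: positive_vtranslation initiated_vtranslation strict_mono_def)

lemma positive_eq_vtranslation:
  assumes "positive g" shows "g = vtranslation (initiated g) (\<lambda>r. snd (g (r, 0)))"
proof -
  have sys: "systemic g" using assms positive_def by blast
  define d where "d r = snd (g (r, 0))" for r
  have "g (r, n) = (initiated g r, n + d r)" for r n
  proof -
    have "strict_mono (\<lambda>n. snd (g (r, n)))"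
      using assms unfolding positive_def strict_mono_def by blast
    moreover have "surj (\<lambda>n. snd (g (r, n)))"
    proof -
      have "\<exists>n. m = snd (g (r, n))" for m
      proof -
        have "(initiated g r, m) \<in> g ` vertical r"
          using systemic_image_vertical[OF sys] by simp
        then obtain x where "fst x = r" "g x = (initiated g r, m)" by auto
        then show ?thesis by (cases x) (auto intro!: exI[of _ "snd x"])
      qed
      then show ?thesis by (simp add: surj_def)
    qed
    ultimately have "snd (g (r, n)) = n + d r"
      unfolding d_def by (rule strict_mono_surj_int_eq_translate)
    then show ?thesis using fst_systemic[OF sys, of r n] by (simp add: prod_eq_iff)
  qed
  then show ?thesis unfolding d_def[symmetric] by (simp add: fun_eq_iff split_paired_all)
qed

lemma negative_eq_vtranslation_vflip:
  assumes "negative g" obtains d where "g = vtranslation (initiated g) d \<circ> vflip"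
proof -
  have sys: "systemic g" using assms negative_def by blast
  have "vflip ` vertical r = vertical r" for r
    by (auto intro: image_eqI[where x = "vflip x" for x])
  then have image: "(g \<circ> vflip) ` vertical r = vertical (initiated g r)" for r
    using systemic_image_vertical[OF sys] by (metis image_comp)
  have "bij (g \<circ> vflip)"
    using sys o_bij[OF vflip_comp_vflip vflip_comp_vflip] bij_comp unfolding systemic_def by blast
  with image have sys': "systemic (g \<circ> vflip)"
    unfolding systemic_def by blast
  have initiated: "initiated (g \<circ> vflip) = initiated g"
    using systemic_image_vertical[OF sys'] image by (simp add: fun_eq_iff)
  have "snd ((g \<circ> vflip) (r, m)) < snd ((g \<circ> vflip) (r, n))" if "m < n" for r m n
    using assms that unfolding negative_def by simp
  with sys' have "positive (g \<circ> vflip)"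
    unfolding positive_def by blast
  from positive_eq_vtranslation[OF this]
  have "g \<circ> vflip \<circ> vflip = vtranslation (initiated g) (\<lambda>r. snd ((g \<circ> vflip) (r, 0))) \<circ> vflip"
    unfolding initiated by simp
  then show ?thesis using that by (simp add: comp_assoc)
qed

lemma square_eq_vtranslation:
  assumes "positive g \<or> negative g"
  obtains e where "g \<circ> g = vtranslation (initiated g \<circ> initiated g) e"
  using assms
proof
  assume "positive g"
  then have "g \<circ> g = vtranslation (initiated g) (\<lambda>r. snd (g (r, 0))) \<circ>
      vtranslation (initiated g) (\<lambda>r. snd (g (r, 0)))"
    using positive_eq_vtranslation by metis
  then show ?thesis using that by (simp add: vtranslation_comp)
next
  assume "negative g"
  then obtain d where d: "g = vtranslation (initiated g) d \<circ> vflip"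
    by (rule negative_eq_vtranslation_vflip)
  have "g \<circ> g = vtranslation (initiated g) d \<circ> (vflip \<circ> vtranslation (initiated g) d \<circ> vflip)"
    by (subst d, subst d) (simp add: comp_assoc)
  then show ?thesis using that by (simp add: vflip_vtranslation_vflip vtranslation_comp)
qed

lemma positive_comp_negative:
  assumes "negative f" "negative g" shows "positive (f \<circ> g)"
proof -
  obtain d where d: "f = vtranslation (initiated f) d \<circ> vflip"
    using assms(1) by (rule negative_eq_vtranslation_vflip)
  obtain d' where d': "g = vtranslation (initiated g) d' \<circ> vflip"
    using assms(2) by (rule negative_eq_vtranslation_vflip)
  have "f \<circ> g = vtranslation (initiated f) d \<circ> (vflip \<circ> vtranslation (initiated g) d' \<circ> vflip)"
    by (subst d, subst d') (simp add: comp_assoc)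
  also have "\<dots> = vtranslation (initiated f \<circ> initiated g) (\<lambda>r. - d' r + d (initiated g r))"
    by (simp add: vflip_vtranslation_vflip vtranslation_comp)
  finally show ?thesis
    using assms bij_initiated bij_comp positive_vtranslation negative_def by metis
qed

lemma finite_inj_on_extends_to_bij:
  fixes f :: "'a \<Rightarrow> 'a"
  assumes "finite D" "inj_on f D"
  shows "\<exists>k. bij k \<and> (\<forall>x\<in>D. k x = f x)"
  using assms
proof (induction D rule: finite_induct)
  case empty
  show ?case using bij_id by blast
next
  case (insert x D)
  then obtain k where k: "bij k" "\<forall>y\<in>D. k y = f y" by auto
  let ?k = "transpose (k x) (f x) \<circ> k"
  have "?k y = f y" if "y \<in> D" for y
  proof -
    have "k y \<noteq> k x" using bij_is_inj[OF k(1)] insert.hyps(2) that by (metis injD)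
    moreover have "f y \<noteq> f x" using insert.prems insert.hyps(2) that by (auto simp: inj_on_def)
    ultimately show ?thesis using k(2) that by simp
  qed
  moreover have "bij ?k" using k(1) by (simp add: bij_comp)
  ultimately show ?case by (metis comp_apply insert_iff transpose_apply_first)
qed

lemma finite_inj_on_square_root:
  fixes h :: "'a \<Rightarrow> 'a"
  assumes "infinite (UNIV :: 'a set)" "finite S" "inj_on h S"
  obtains k where "bij k" "\<forall>s\<in>S. k (k s) = h s"
proof -
  have "infinite (UNIV - (S \<union> h ` S))"
    using assms(1,2) by (simp add: Diff_infinite_finite)
  then obtain B where B: "B \<subseteq> UNIV - (S \<union> h ` S)" "finite B" "card B = card S"
    by (metis infinite_arbitrarily_large)
  then obtain \<beta> where \<beta>: "bij_betw \<beta> S B"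
    using finite_same_card_bij[OF assms(2)] by metis
  \<comment> \<open>the square root moves S onto a fresh copy B of S, and B onto \<open>h ` S\<close>\<close>
  define f where "f x = (if x \<in> S then \<beta> x else h (inv_into S \<beta> x))" for x
  have "inj_on f S"
    using bij_betw_imp_inj_on[OF \<beta>] inj_on_cong[of S f \<beta>] by (simp add: f_def)
  moreover have "inj_on f B"
  proof -
    have "inj_on (h \<circ> inv_into S \<beta>) B"
      using bij_betw_inv_into[OF \<beta>] assms(3)
      by (metis bij_betw_imp_inj_on bij_betw_imp_surj_on comp_inj_on)
    moreover have "f x = (h \<circ> inv_into S \<beta>) x" if "x \<in> B" for x
      using B(1) that by (auto simp: f_def)
    ultimately show ?thesis using inj_on_cong by blast
  qed
  moreover have "f ` S = B" and "f ` B \<subseteq> h ` S"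
    using bij_betw_imp_surj_on[OF \<beta>] bij_betw_inv_into[OF \<beta>] B(1)
    by (auto simp: f_def bij_betw_def)
  ultimately have "inj_on f (S \<union> B)"
    using B(1) by (auto simp: inj_on_Un)
  then obtain k where k: "bij k" "\<forall>x\<in>S \<union> B. k x = f x"
    using finite_inj_on_extends_to_bij assms(2) B(2) by (metis finite_Un)
  have "k (k s) = h s" if "s \<in> S" for s
  proof -
    have "k s = \<beta> s" and "\<beta> s \<in> B" and "\<beta> s \<notin> S"
      using k(2) that \<beta> B(1) by (auto simp: f_def bij_betw_def)
    then show ?thesis
      using k(2) bij_betw_inv_into_left[OF \<beta> that] by (simp add: f_def)
  qed
  with k(1) show ?thesis using that by blast
qed

lemma positive_approximable:
  assumes "sym_subgroup G" "{g. shift g} \<subseteq> G" "G \<subseteq> Gamma_A11" "initiated ` G = {h. bij h}"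
    and "positive p" "finite F"
  shows "\<exists>q\<in>G. \<forall>x\<in>F. q x = p x"
proof -
  define d where "d r = snd (p (r, 0))" for r
  have p: "p = vtranslation (initiated p) d"
    unfolding d_def using assms(5) by (rule positive_eq_vtranslation)
  have "inj_on (initiated p) (fst ` F)"
    using assms(5) bij_initiated bij_is_inj inj_on_subset positive_def by blast
  then obtain k where k: "bij k" "\<forall>r\<in>fst ` F. k (k r) = initiated p r"
    using finite_inj_on_square_root infinite_UNIV_char_0 assms(6) by blast
  then obtain g where g: "g \<in> G" "initiated g = k"
    using assms(4) by (metis imageE mem_Collect_eq)
  then obtain e where e: "g \<circ> g = vtranslation (k \<circ> k) e"
    using assms(3) square_eq_vtranslation unfolding Gamma_A11_def by blast
  let ?s = "vtranslation id (\<lambda>r. d r - e r)"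
  have "?s \<in> G" using assms(2) shift_vtranslation_id by blast
  with g(1) assms(1) have "g \<circ> g \<circ> ?s \<in> G"
    unfolding sym_subgroup_def by blast
  moreover have "(g \<circ> g \<circ> ?s) x = p x" if "x \<in> F" for x
  proof -
    obtain r n where x: "x = (r, n)" by fastforce
    then have "k (k r) = initiated p r" using k(2) that by force
    moreover have "g \<circ> g \<circ> ?s = vtranslation (k \<circ> k) d"
      unfolding e vtranslation_comp by simp
    moreover have "p x = vtranslation (initiated p) d x" by (rule fun_cong[OF p])
    ultimately show ?thesis using x by simp
  qed
  ultimately show ?thesis by blast
qed

lemma Gamma_succ_subset:
  assumes "sym_subgroup G" "sym_closed G" "{g. shift g} \<subseteq> G" "G \<subseteq> Gamma_A11"
    and "initiated ` G = {h. bij h}"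
  shows "Gamma_succ \<subseteq> G"
proof
  fix p assume "p \<in> Gamma_succ"
  then have "positive p" by (simp add: Gamma_succ_def)
  then have "bij p" and "\<exists>q\<in>G. \<forall>x\<in>F. q x = p x" if "finite F" for F
    using positive_approximable[OF assms(1,3,4,5) _ that] unfolding positive_def systemic_def
    by blast+
  then show "p \<in> G"
    using assms(2) unfolding sym_closed_def by blast
qed

lemma Gamma_A11_subset:
  assumes "sym_subgroup G" "Gamma_succ \<subseteq> G" "g \<in> G" "negative g"
  shows "Gamma_A11 \<subseteq> G"
proof
  have comp: "a \<circ> b \<in> G" if "a \<in> G" "b \<in> G" for a b
    using assms(1) that unfolding sym_subgroup_def by blast
  have "inv g \<in> G"
    using assms(1,3) unfolding sym_subgroup_def by blast
  have "g \<circ> inv g = id"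
    using assms(4) bij_is_surj surj_iff unfolding negative_def systemic_def by metis
  fix f assume "f \<in> Gamma_A11"
  then consider "positive f" | "negative f" unfolding Gamma_A11_def by blast
  then show "f \<in> G"
  proof cases
    case 1
    then show ?thesis using assms(2) unfolding Gamma_succ_def by blast
  next
    case 2
    then have "f \<circ> g \<in> G"
      using assms(2) positive_comp_negative[OF 2 assms(4)] unfolding Gamma_succ_def by blast
    then have "f \<circ> g \<circ> inv g \<in> G"
      using comp \<open>inv g \<in> G\<close> by blast
    with \<open>g \<circ> inv g = id\<close> show ?thesis by (simp add: comp_assoc)
  qed
qed

theorem mainTheorem9:
  fixes G :: "(pt \<Rightarrow> pt) set"
  assumes "sym_subgroup G"
    and "sym_closed G"
    and "{g. shift g} \<subseteq> G"
    and "G \<subseteq> Gamma_A11"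
    and "initiated ` G = {h. bij h}"
  shows "G = Gamma_succ \<or> G = Gamma_A11"
proof -
  have succ: "Gamma_succ \<subseteq> G"
    using assms by (rule Gamma_succ_subset)
  show ?thesis
  proof (cases "\<exists>g\<in>G. negative g")
    case True
    then have "Gamma_A11 \<subseteq> G"
      using Gamma_A11_subset[OF assms(1) succ] by blast
    then show ?thesis using assms(4) by blast
  next
    case False
    then have "G \<subseteq> Gamma_succ"
      using assms(4) by (auto simp: Gamma_A11_def Gamma_succ_def)
    then show ?thesis using succ by blast
  qed
qed

end
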